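(* Let $R$ be a commutative Noetherian domain, $I\subset R$ an ideal and $\mathfrak{p}\in\operatorname{Ass}^\infty(I)$. Then $(I^k:\mathfrak{p})=I(I^{k-1}:\mathfrak{p})$ for all $k\gg0$.
   Context: $\operatorname{Ass}^\infty(I)$ is the set of primes lying in $\operatorname{Ass}(I^k)$ for all $k\gg0$ (this set is well defined since $\operatorname{Ass}(I^k)$ is eventually constant). *)

theory Defs
  imports "HOL-Algebra.Ideal_Product" "HOL-Algebra.Ring_Divisibility"
begin

definition ideal_colon :: "('a, 'b) ring_scheme \<Rightarrow> 'a set \<Rightarrow> 'a set \<Rightarrow> 'a set" where
  "ideal_colon R J K = {r \<in> carrier R. \<forall>k \<in> K. r \<otimes>\<^bsub>R\<^esub> k \<in> J}"

fun ideal_pow :: "('a, 'b) ring_scheme \<Rightarrow> 'a set \<Rightarrow> nat \<Rightarrow> 'a set" where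
  "ideal_pow R I 0 = carrier R"
| "ideal_pow R I (Suc k) = ideal_prod R I (ideal_pow R I k)"

text \<open>Associated primes of R/J: primes of the form (J : x), x in R.\<close>
definition Ass :: "('a, 'b) ring_scheme \<Rightarrow> 'a set \<Rightarrow> 'a set set" where
  "Ass R J = {P. primeideal P R \<and> (\<exists>x \<in> carrier R. P = ideal_colon R J {x})}"

definition Ass_inf :: "('a, 'b) ring_scheme \<Rightarrow> 'a set \<Rightarrow> 'a set set" where
  "Ass_inf R I = {P. \<exists>k0. \<forall>k \<ge> k0. P \<in> Ass R (ideal_pow R I k)}"

end

theory Submission
  imports Defs "HOL-Library.List_Lexorder" "HOL-Library.Ramsey"
begin

text \<open>
  Take \<open>a \<noteq> 0\<close> in \<open>P\<close>: if \<open>P = (I\<^sup>k : x)\<close> then \<open>I\<^sup>k \<subseteq> P\<close>, so a power of a nonzero element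
  of \<open>I\<close> will do (only \<open>P \<in> Ass(I\<^sup>k)\<close> for a single \<open>k\<close> is used). The colon ideals
  \<open>Q\<^sub>k = (I\<^sup>k : P)\<close> satisfy \<open>I Q\<^sub>k \<subseteq> Q\<^sub>k\<^sub>+\<^sub>1\<close> and \<open>a Q\<^sub>k \<subseteq> I\<^sup>k\<close>, so \<open>N\<^sub>k = a Q\<^sub>k\<close> is an
  \<open>I\<close>-filtration inside the \<open>I\<close>-adic one. Such a filtration is eventually stable,
  \<open>N\<^sub>k\<^sub>+\<^sub>1 = I N\<^sub>k\<close>; this is finite generation of a graded ideal of the Rees algebra, proved
  here by a Groebner-style argument. With generators \<open>f\<^sub>1, \<dots>, f\<^sub>n\<close> of \<open>I\<close>, the elements of
  \<open>I\<^sup>k\<close> are the values at \<open>f\<close> of forms of degree \<open>k\<close>. For an exponent vector \<open>b\<close> of degree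
  \<open>d\<close> consider the ideal of lexicographically leading coefficients at \<open>b\<close> of forms with value
  in \<open>N\<^sub>d\<close>. By Dickson's lemma and the ascending chain condition only finitely many \<open>b\<close> have a
  leading coefficient ideal not generated by those at the \<open>b - e\<^sub>i\<close>, and in higher degrees
  every form is reduced modulo \<open>I N\<^sub>k\<close> one leading term at a time. Cancelling \<open>a\<close> in the
  domain gives \<open>Q\<^sub>k\<^sub>+\<^sub>1 = I Q\<^sub>k\<close>.
\<close>

section \<open>Exponent vectors\<close>

definition exp_inc :: "nat \<Rightarrow> nat list \<Rightarrow> nat list" where
  "exp_inc i a = a[i := Suc (a ! i)]"

definition exp_dec :: "nat \<Rightarrow> nat list \<Rightarrow> nat list" where
  "exp_dec i a = a[i := a ! i - 1]"

definition exps :: "nat \<Rightarrow> nat \<Rightarrow> nat list set" where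
  "exps n k = {a. length a = n \<and> sum_list a = k}"

lemma length_exp_inc [simp]: "length (exp_inc i a) = length a"
  by (simp add: exp_inc_def)

lemma length_exp_dec [simp]: "length (exp_dec i a) = length a"
  by (simp add: exp_dec_def)

lemma nth_exp_inc_same [simp]: "i < length a \<Longrightarrow> exp_inc i a ! i = Suc (a ! i)"
  by (simp add: exp_inc_def)

lemma exp_dec_exp_inc [simp]: "exp_dec i (exp_inc i a) = a"
  by (cases "i < length a") (simp_all add: exp_inc_def exp_dec_def list_update_beyond)

lemma exp_inc_exp_dec [simp]: "0 < a ! i \<Longrightarrow> exp_inc i (exp_dec i a) = a"
  by (cases "i < length a") (simp_all add: exp_inc_def exp_dec_def list_update_beyond)

lemma inj_exp_inc: "inj (exp_inc i)"
  by (metis exp_dec_exp_inc injI)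

lemma exp_inc_in_exps: "a \<in> exps n k \<Longrightarrow> i < n \<Longrightarrow> exp_inc i a \<in> exps n (Suc k)"
  by (simp add: exps_def exp_inc_def sum_list_update)

lemma exp_dec_in_exps: "a \<in> exps n (Suc k) \<Longrightarrow> i < n \<Longrightarrow> 0 < a ! i \<Longrightarrow> exp_dec i a \<in> exps n k"
  using elem_le_sum_list[of i a] by (auto simp: exps_def exp_dec_def sum_list_update)

lemma sum_list_exp_dec: "i < length a \<Longrightarrow> 0 < a ! i \<Longrightarrow> sum_list (exp_dec i a) < sum_list a"
  using exp_dec_in_exps[of a "length a" "sum_list a - 1" i] elem_le_sum_list[of i a]
  by (simp add: exps_def)

lemma finite_exps: "finite (exps n k)"
proof (rule finite_subset)
  show "exps n k \<subseteq> {xs. set xs \<subseteq> {0..k} \<and> length xs = n}"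
    by (auto simp: exps_def member_le_sum_list)
qed (rule finite_lists_length_eq, simp)

lemma exps_0: "exps n 0 = {replicate n 0}"
  by (auto simp: exps_def intro: replicate_eqI)

lemma exp_inc_less_exp_inc_iff:
  "length a = length b \<Longrightarrow> i < length a \<Longrightarrow> exp_inc i a < exp_inc i b \<longleftrightarrow> a < b"
proof (induction a arbitrary: b i)
  case (Cons x xs)
  then obtain y ys where b: "b = y # ys" by (cases b) auto
  show ?case
  proof (cases i)
    case (Suc j)
    then have "exp_inc i (x # xs) = x # exp_inc j xs" "exp_inc i b = y # exp_inc j ys"
      using b by (simp_all add: exp_inc_def)
    then show ?thesis using Cons.IH[of ys j] Cons.prems b Suc by simp
  qed (use b in \<open>simp add: exp_inc_def\<close>)
qed simp

lemma list_all2_le_exp_dec: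
  assumes "list_all2 (\<le>) a b" "a \<noteq> b"
  obtains i where "i < length b" "0 < b ! i" "list_all2 (\<le>) a (exp_dec i b)"
proof -
  have len: "length a = length b" and le: "\<forall>j<length b. a ! j \<le> b ! j"
    using assms(1) by (simp_all add: list_all2_conv_all_nth)
  have "\<not> (\<forall>j<length b. a ! j = b ! j)"
    using assms(2) len nth_equalityI by metis
  then obtain i where i: "i < length b" "a ! i < b ! i"
    using le le_neq_implies_less by blast
  have "a ! j \<le> exp_dec i b ! j" if "j < length b" for j
    using that i le by (cases "j = i") (simp_all add: exp_dec_def)
  then have "list_all2 (\<le>) a (exp_dec i b)"
    using len by (simp add: list_all2_conv_all_nth)
  with i show ?thesis by (intro that) simp_all
qed

lemma no_strictly_decreasing_on_infinite:
  fixes h :: "nat \<Rightarrow> nat"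
  assumes "infinite Y" "\<forall>i\<in>Y. \<forall>j\<in>Y. i < j \<longrightarrow> h j < h i"
  shows False
proof -
  obtain y0 where y0: "y0 \<in> Y" using assms(1) by (metis finite.emptyI ex_in_conv)
  let ?Z = "{j\<in>Y. y0 < j}"
  have "inj_on h ?Z"
    using assms(2) unfolding inj_on_def by (metis (mono_tags, lifting) mem_Collect_eq linorder_neqE_nat less_irrefl)
  moreover have "h ` ?Z \<subseteq> {..<h y0}" using assms(2) y0 by auto
  ultimately have "finite ?Z" by (rule inj_on_finite) simp
  moreover have "?Z = Y - {..y0}" by auto
  ultimately show False using assms(1) by simp
qed

text \<open>Colour a pair \<open>i < j\<close> by whether the \<open>m\<close>-th coordinate weakly increases;
  an infinite homogeneous set cannot have the decreasing colour.\<close>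

lemma dickson_subsequence:
  fixes s :: "nat \<Rightarrow> nat list"
  shows "\<exists>Y. infinite Y \<and> (\<forall>i\<in>Y. \<forall>j\<in>Y. i < j \<longrightarrow> (\<forall>c<m. s i ! c \<le> s j ! c))"
proof (induction m)
  case 0
  show ?case by (intro exI[of _ UNIV]) simp
next
  case (Suc m)
  then obtain Y where Y: "infinite Y" "\<forall>i\<in>Y. \<forall>j\<in>Y. i < j \<longrightarrow> (\<forall>c<m. s i ! c \<le> s j ! c)"
    by blast
  define colour where "colour X = (if s (Min X) ! m \<le> s (Max X) ! m then 1 else 0 :: nat)" for X
  have colour_pair: "colour {i, j} = (if s i ! m \<le> s j ! m then 1 else 0)" if "i < j" for i j
    using that by (simp add: colour_def min_def max_def)
  have "\<exists>Y' t. Y' \<subseteq> Y \<and> infinite Y' \<and> t < 2 \<and> (\<forall>i\<in>Y'. \<forall>j\<in>Y'. i \<noteq> j \<longrightarrow> colour {i, j} = t)"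
    by (rule Ramsey2) (use Y(1) in \<open>simp_all add: colour_def\<close>)
  then obtain Y' t where Y': "Y' \<subseteq> Y" "infinite Y'"
    and hom: "\<forall>i\<in>Y'. \<forall>j\<in>Y'. i \<noteq> j \<longrightarrow> colour {i, j} = t"
    by blast
  have t_le: "t = 1 \<longleftrightarrow> s i ! m \<le> s j ! m" if "i \<in> Y'" "j \<in> Y'" "i < j" for i j
    using hom that colour_pair[OF \<open>i < j\<close>] by (metis less_irrefl zero_neq_one)
  show ?case
  proof (cases "t = 1")
    case False
    then have "\<forall>i\<in>Y'. \<forall>j\<in>Y'. i < j \<longrightarrow> s j ! m < s i ! m"
      using t_le by (meson not_le)
    then show ?thesis
      using no_strictly_decreasing_on_infinite[OF Y'(2), of "\<lambda>i. s i ! m"] by blast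
  next
    case True
    have "s i ! c \<le> s j ! c" if "i \<in> Y'" "j \<in> Y'" "i < j" "c < Suc m" for i j c
    proof (cases "c = m")
      case False
      then have "c < m" using that(4) by simp
      then show ?thesis using that Y(2) Y'(1) by blast
    qed (use that t_le True in simp)
    then have "\<forall>i\<in>Y'. \<forall>j\<in>Y'. i < j \<longrightarrow> (\<forall>c<Suc m. s i ! c \<le> s j ! c)"
      by blast
    with Y'(2) show ?thesis by blast
  qed
qed

context ring
begin

lemma ideal_finsum_closed:
  assumes "ideal A R" "finite F" "\<And>i. i \<in> F \<Longrightarrow> f i \<in> A"
  shows "finsum R f F \<in> A"
  using assms(2,3)
proof (induction F rule: finite_induct)
  case empty
  then show ?case using assms(1) by (simp add: additive_subgroup.zero_closed ideal.axioms(1))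
next
  case (insert x F)
  have "f \<in> insert x F \<rightarrow> carrier R" using insert.prems ideal.Icarr[OF assms(1)] by blast
  then have "finsum R f (insert x F) = f x \<oplus> finsum R f F" using insert.hyps by (simp add: finsum_insert)
  also have "\<dots> \<in> A"
    using insert assms(1) by (simp add: additive_subgroup.a_closed ideal.axioms(1))
  finally show ?case .
qed

lemma ideal_prod_subset:
  assumes "ideal K R" "\<And>i j. i \<in> I \<Longrightarrow> j \<in> J \<Longrightarrow> i \<otimes> j \<in> K"
  shows "I \<cdot> J \<subseteq> K"
proof
  fix z assume "z \<in> I \<cdot> J"
  then show "z \<in> K"
    by (induction z rule: ideal_prod.induct)
      (use assms in \<open>simp_all add: additive_subgroup.a_closed ideal.axioms(1)\<close>)
qed

lemma ideal_pow_is_ideal: "ideal I R \<Longrightarrow> ideal (ideal_pow R I k) R"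
  by (induction k) (simp_all add: oneideal ideal_prod_is_ideal)

end

context cring
begin

lemma idealI_closed:
  assumes "S \<subseteq> carrier R" "\<zero> \<in> S" "\<And>x y. x \<in> S \<Longrightarrow> y \<in> S \<Longrightarrow> x \<oplus> y \<in> S"
    "\<And>r x. r \<in> carrier R \<Longrightarrow> x \<in> S \<Longrightarrow> r \<otimes> x \<in> S"
  shows "ideal S R"
proof (rule idealI)
  have "\<ominus> x \<in> S" if "x \<in> S" for x
    using assms(1) assms(4)[of "\<ominus> \<one>" x] that by (auto simp: l_minus)
  then show "subgroup S (add_monoid R)"
    using assms(1-3) by (auto intro!: subgroup.intro simp: a_inv_def[symmetric])
  show "\<And>a x. a \<in> S \<Longrightarrow> x \<in> carrier R \<Longrightarrow> a \<otimes> x \<in> S"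
    using assms(1,4) by (metis m_comm subsetD)
qed (use assms(4) ring_axioms in auto)

lemma ideal_colon_is_ideal:
  assumes "ideal J R" "K \<subseteq> carrier R"
  shows "ideal (ideal_colon R J K) R"
  using assms
  by (intro idealI_closed)
    (auto simp: ideal_colon_def l_distr m_assoc subset_iff additive_subgroup.a_closed
      additive_subgroup.zero_closed ideal.axioms(1) ideal.I_l_closed)

lemma nat_pow_in_ideal_pow: "ideal I R \<Longrightarrow> b \<in> I \<Longrightarrow> b [^] k \<in> ideal_pow R I k"
proof (induction k)
  case (Suc k)
  then have "b \<otimes> b [^] k \<in> ideal_prod R I (ideal_pow R I k)" by (simp add: ideal_prod.prod)
  with Suc.prems show ?case by (simp add: ideal.Icarr nat_pow_Suc m_comm)
qed simp

lemma ideal_image_mult: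
  assumes "ideal J R" "a \<in> carrier R"
  shows "ideal ((\<lambda>y. a \<otimes> y) ` J) R"
proof (rule idealI_closed)
  interpret J: ideal J R by fact
  show "(\<lambda>y. a \<otimes> y) ` J \<subseteq> carrier R" using assms(2) by auto
  show "\<zero> \<in> (\<lambda>y. a \<otimes> y) ` J" using assms(2) by (intro image_eqI[of _ _ \<zero>]) simp_all
  show "x \<oplus> y \<in> (\<lambda>y. a \<otimes> y) ` J" if "x \<in> (\<lambda>y. a \<otimes> y) ` J" "y \<in> (\<lambda>y. a \<otimes> y) ` J" for x y
    using that assms(2) by (auto simp: r_distr[symmetric] intro: image_eqI[OF _ J.a_closed])
  show "r \<otimes> x \<in> (\<lambda>y. a \<otimes> y) ` J" if "r \<in> carrier R" "x \<in> (\<lambda>y. a \<otimes> y) ` J" for r x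
    using that assms(2) by (auto simp: m_lcomm intro: image_eqI[OF _ J.I_l_closed])
qed

lemma ideal_prod_image_mult:
  assumes "ideal I R" "ideal J R" "a \<in> carrier R"
  shows "I \<cdot> (\<lambda>y. a \<otimes> y) ` J \<subseteq> (\<lambda>y. a \<otimes> y) ` (I \<cdot> J)"
proof (rule ideal_prod_subset)
  show "ideal ((\<lambda>y. a \<otimes> y) ` (I \<cdot> J)) R"
    by (rule ideal_image_mult[OF ideal_prod_is_ideal[OF assms(1,2)] assms(3)])
  fix i z assume i: "i \<in> I" and z: "z \<in> (\<lambda>y. a \<otimes> y) ` J"
  then obtain y where "y \<in> J" "z = a \<otimes> y" by blast
  moreover have "i \<in> carrier R" "y \<in> carrier R"
    using ideal.Icarr[OF assms(1) i] ideal.Icarr[OF assms(2) \<open>y \<in> J\<close>] by simp_all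
  ultimately show "i \<otimes> z \<in> (\<lambda>y. a \<otimes> y) ` (I \<cdot> J)"
    using i assms(3) by (auto simp: m_lcomm intro: ideal_prod.prod)
qed

end

lemma (in domain) nat_pow_nonzero: "b \<in> carrier R \<Longrightarrow> b \<noteq> \<zero> \<Longrightarrow> b [^] (k::nat) \<noteq> \<zero>"
  by (induction k) (simp_all add: integral_iff)

lemma (in domain) ideal_image_mult_cancel:
  assumes "a \<in> carrier R" "a \<noteq> \<zero>" "J \<subseteq> carrier R" "K \<subseteq> carrier R"
    and "(\<lambda>y. a \<otimes> y) ` J \<subseteq> (\<lambda>y. a \<otimes> y) ` K"
  shows "J \<subseteq> K"
  using assms m_lcancel by blast

lemma (in noetherian_ring) ideals_not_strictly_ascending:
  fixes Y :: "nat set" and X :: "nat \<Rightarrow> 'a set"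
  assumes "infinite Y" "\<forall>i\<in>Y. \<forall>j\<in>Y. i < j \<longrightarrow> X i \<subseteq> X j" "\<And>i. ideal (X i) R"
  shows "\<exists>i\<in>Y. \<exists>j\<in>Y. i < j \<and> X j \<subseteq> X i"
proof -
  have "X ` Y \<noteq> {}" using assms(1) by auto
  moreover have "subset.chain {I. ideal I R} (X ` Y)"
  proof -
    have "X i \<subseteq> X j \<or> X j \<subseteq> X i" if "i \<in> Y" "j \<in> Y" for i j
      using assms(2) that by (cases i j rule: linorder_cases) auto
    then have "\<forall>A\<in>X ` Y. \<forall>B\<in>X ` Y. A \<subseteq> B \<or> B \<subseteq> A" by blast
    moreover have "X ` Y \<subseteq> {I. ideal I R}" using assms(3) by blast
    ultimately show ?thesis unfolding subset.chain_def by (metis psubset_eq sup2CI)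
  qed
  ultimately have "\<Union>(X ` Y) \<in> X ` Y" by (rule ideal_chain_is_trivial)
  then obtain i where i: "i \<in> Y" "\<Union>(X ` Y) = X i" by auto
  moreover obtain j where "j \<in> Y" "i < j" using assms(1) by (metis infinite_nat_iff_unbounded)
  ultimately show ?thesis by blast
qed

section \<open>Forms in a list of generators\<close>

text \<open>A coefficient function \<open>c\<close> stands for the form \<open>\<Sum> c(a) x\<^sup>a\<close> over the exponent vectors
  \<open>a\<close> of degree \<open>k\<close>; \<open>form_eval R fs k c\<close> is its value at \<open>x = fs\<close>, and \<open>var_mult R i c\<close> is
  the coefficient function of \<open>x\<^sub>i\<close> times the form.\<close>

definition monomial :: "('a, 'b) ring_scheme \<Rightarrow> 'a list \<Rightarrow> nat list \<Rightarrow> 'a" where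
  "monomial R fs a = finprod R (\<lambda>i. fs ! i [^]\<^bsub>R\<^esub> (a ! i)) {..<length fs}"

definition form_eval :: "('a, 'b) ring_scheme \<Rightarrow> 'a list \<Rightarrow> nat \<Rightarrow> (nat list \<Rightarrow> 'a) \<Rightarrow> 'a" where
  "form_eval R fs k c = finsum R (\<lambda>a. c a \<otimes>\<^bsub>R\<^esub> monomial R fs a) (exps (length fs) k)"

definition var_mult :: "('a, 'b) ring_scheme \<Rightarrow> nat \<Rightarrow> (nat list \<Rightarrow> 'a) \<Rightarrow> nat list \<Rightarrow> 'a" where
  "var_mult R i c g = (if 0 < g ! i then c (exp_dec i g) else \<zero>\<^bsub>R\<^esub>)"

locale cring_gens = cring R for R (structure) +
  fixes fs :: "'a list"
  assumes gens_carrier: "set fs \<subseteq> carrier R"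
begin

abbreviation "n \<equiv> length fs"

abbreviation "I \<equiv> Idl (set fs)"

lemma gen_closed: "i < n \<Longrightarrow> fs ! i \<in> carrier R"
  using gens_carrier by auto

lemma gen_in_ideal: "i < n \<Longrightarrow> fs ! i \<in> I"
  using genideal_self[OF gens_carrier] by auto

lemma gens_ideal: "ideal I R"
  by (rule genideal_ideal[OF gens_carrier])

lemma monomial_closed [simp]: "monomial R fs a \<in> carrier R"
  unfolding monomial_def using gen_closed by (auto intro!: finprod_closed)

lemma monomial_replicate_0: "monomial R fs (replicate n 0) = \<one>"
  unfolding monomial_def by (rule finprod_one_eqI) simp

lemma monomial_exp_inc:
  assumes "i < n" "length a = n"
  shows "monomial R fs (exp_inc i a) = fs ! i \<otimes> monomial R fs a"
proof -
  have "monomial R fs (exp_inc i a)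
      = (\<Otimes>j\<in>{..<n}. fs ! j [^] (a ! j) \<otimes> (if j = i then fs ! j else \<one>))"
    unfolding monomial_def
    by (rule finprod_cong') (use assms gen_closed in \<open>auto simp: exp_inc_def nth_list_update\<close>)
  also have "\<dots> = monomial R fs a \<otimes> (\<Otimes>j\<in>{..<n}. if j = i then fs ! j else \<one>)"
    unfolding monomial_def by (subst finprod_multf) (use gen_closed in auto)
  also have "(\<Otimes>j\<in>{..<n}. if j = i then fs ! j else \<one>) = fs ! i"
    using finprod_singleton_swap[of i "{..<n}" "\<lambda>j. fs ! j"] assms gen_closed by auto
  finally show ?thesis using assms gen_closed m_comm by auto
qed

lemma form_eval_closed [simp]: "c \<in> UNIV \<rightarrow> carrier R \<Longrightarrow> form_eval R fs k c \<in> carrier R"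
  unfolding form_eval_def by (auto intro!: finsum_closed simp: Pi_iff)

lemma form_eval_add:
  assumes "c \<in> UNIV \<rightarrow> carrier R" "d \<in> UNIV \<rightarrow> carrier R"
  shows "form_eval R fs k (\<lambda>g. c g \<oplus> d g) = form_eval R fs k c \<oplus> form_eval R fs k d"
proof -
  have "form_eval R fs k (\<lambda>g. c g \<oplus> d g)
      = (\<Oplus>g\<in>exps n k. c g \<otimes> monomial R fs g \<oplus> d g \<otimes> monomial R fs g)"
    unfolding form_eval_def by (rule finsum_cong') (use assms in \<open>auto simp: l_distr Pi_iff\<close>)
  also have "\<dots> = form_eval R fs k c \<oplus> form_eval R fs k d"
    unfolding form_eval_def by (rule finsum_addf) (use assms in \<open>auto simp: Pi_iff\<close>)
  finally show ?thesis .
qed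

lemma form_eval_smult:
  assumes "c \<in> UNIV \<rightarrow> carrier R" "r \<in> carrier R"
  shows "form_eval R fs k (\<lambda>g. r \<otimes> c g) = r \<otimes> form_eval R fs k c"
proof -
  have "form_eval R fs k (\<lambda>g. r \<otimes> c g) = (\<Oplus>g\<in>exps n k. r \<otimes> (c g \<otimes> monomial R fs g))"
    unfolding form_eval_def by (rule finsum_cong') (use assms in \<open>auto simp: m_assoc Pi_iff\<close>)
  also have "\<dots> = r \<otimes> form_eval R fs k c"
    unfolding form_eval_def by (rule finsum_rdistr[symmetric]) (use assms in \<open>auto simp: finite_exps Pi_iff\<close>)
  finally show ?thesis .
qed

lemma form_eval_uminus:
  assumes "c \<in> UNIV \<rightarrow> carrier R"
  shows "form_eval R fs k (\<lambda>g. \<ominus> c g) = \<ominus> form_eval R fs k c"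
  using form_eval_smult[OF assms, of "\<ominus> \<one>" k] assms by (simp add: l_minus Pi_iff)

lemma form_eval_diff:
  assumes "c \<in> UNIV \<rightarrow> carrier R" "d \<in> UNIV \<rightarrow> carrier R"
  shows "form_eval R fs k (\<lambda>g. c g \<ominus> d g) = form_eval R fs k c \<ominus> form_eval R fs k d"
  using form_eval_add[OF assms(1), of "\<lambda>g. \<ominus> d g" k] form_eval_uminus[OF assms(2), of k] assms(2)
  by (simp add: a_minus_def Pi_iff)

lemma form_eval_eq_zero: "(\<And>g. g \<in> exps n k \<Longrightarrow> c g = \<zero>) \<Longrightarrow> form_eval R fs k c = \<zero>"
  unfolding form_eval_def by (rule add.finprod_one_eqI) simp

lemma form_eval_finsum:
  assumes "finite J" "\<And>j. j \<in> J \<Longrightarrow> d j \<in> UNIV \<rightarrow> carrier R"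
  shows "form_eval R fs k (\<lambda>g. \<Oplus>j\<in>J. d j g) = (\<Oplus>j\<in>J. form_eval R fs k (d j))"
  using assms
proof (induction J rule: finite_induct)
  case empty
  then show ?case by (simp add: form_eval_eq_zero)
next
  case (insert x J)
  have dJ: "(\<lambda>g. \<Oplus>j\<in>J. d j g) \<in> UNIV \<rightarrow> carrier R"
    using insert.prems by (auto intro!: finsum_closed simp: Pi_iff)
  have dx: "d x \<in> UNIV \<rightarrow> carrier R" using insert.prems by simp
  have "(\<lambda>g. \<Oplus>j\<in>insert x J. d j g) = (\<lambda>g. d x g \<oplus> (\<Oplus>j\<in>J. d j g))"
    using insert.hyps insert.prems by (auto simp: finsum_insert Pi_iff)
  then have "form_eval R fs k (\<lambda>g. \<Oplus>j\<in>insert x J. d j g)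
      = form_eval R fs k (d x) \<oplus> form_eval R fs k (\<lambda>g. \<Oplus>j\<in>J. d j g)"
    using form_eval_add[OF dx dJ] by simp
  also have "\<dots> = (\<Oplus>j\<in>insert x J. form_eval R fs k (d j))"
    using insert by (simp add: finsum_insert Pi_iff)
  finally show ?case .
qed

lemma form_eval_zero_or_leading:
  obtains "form_eval R fs k c = \<zero>"
  | b where "b \<in> exps n k" "c b \<noteq> \<zero>" "\<forall>g\<in>exps n k. b < g \<longrightarrow> c g = \<zero>"
proof (cases "\<forall>g\<in>exps n k. c g = \<zero>")
  case True
  then show ?thesis using that(1) form_eval_eq_zero by blast
next
  case False
  let ?S = "{g \<in> exps n k. c g \<noteq> \<zero>}"
  have S: "finite ?S" "?S \<noteq> {}" using False finite_exps by auto
  then have "Max ?S \<in> ?S" by (rule Max_in)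
  moreover have "c g = \<zero>" if "g \<in> exps n k" "Max ?S < g" for g
    using Max_ge[OF S(1), of g] that by force
  ultimately show ?thesis using that(2)[of "Max ?S"] by blast
qed

lemma var_mult_closed [simp]: "c \<in> UNIV \<rightarrow> carrier R \<Longrightarrow> var_mult R i c \<in> UNIV \<rightarrow> carrier R"
  unfolding var_mult_def by auto

lemma form_eval_var_mult:
  assumes c: "c \<in> UNIV \<rightarrow> carrier R" and i: "i < n"
  shows "form_eval R fs (Suc k) (var_mult R i c) = fs ! i \<otimes> form_eval R fs k c"
proof -
  have c_closed: "\<And>g. c g \<in> carrier R" using c by auto
  have supp: "{g \<in> exps n (Suc k). 0 < g ! i} = exp_inc i ` exps n k"
  proof
    show "{g \<in> exps n (Suc k). 0 < g ! i} \<subseteq> exp_inc i ` exps n k"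
      using i by (auto intro!: image_eqI[of _ _ "exp_dec i _"] exp_dec_in_exps)
    show "exp_inc i ` exps n k \<subseteq> {g \<in> exps n (Suc k). 0 < g ! i}"
      using i exp_inc_in_exps by (auto simp: exps_def exp_inc_def)
  qed
  have "form_eval R fs (Suc k) (var_mult R i c)
      = (\<Oplus>g\<in>{g \<in> exps n (Suc k). 0 < g ! i}. var_mult R i c g \<otimes> monomial R fs g)"
    unfolding form_eval_def
    by (rule add.finprod_mono_neutral_cong_right) (auto simp: finite_exps var_mult_def c_closed)
  also have "\<dots> = (\<Oplus>a\<in>exps n k. var_mult R i c (exp_inc i a) \<otimes> monomial R fs (exp_inc i a))"
    unfolding supp
    by (rule add.finprod_reindex) (auto simp: var_mult_def c_closed inj_on_def inj_exp_inc[THEN injD])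
  also have "\<dots> = (\<Oplus>a\<in>exps n k. fs ! i \<otimes> (c a \<otimes> monomial R fs a))"
  proof (rule finsum_cong')
    fix a assume "a \<in> exps n k"
    then have "length a = n" by (simp add: exps_def)
    then show "var_mult R i c (exp_inc i a) \<otimes> monomial R fs (exp_inc i a)
        = fs ! i \<otimes> (c a \<otimes> monomial R fs a)"
      using i c_closed gen_closed[OF i]
      by (simp add: var_mult_def monomial_exp_inc m_lcomm)
  qed (use c_closed gen_closed[OF i] in auto)
  also have "\<dots> = fs ! i \<otimes> form_eval R fs k c"
    unfolding form_eval_def by (rule finsum_rdistr[symmetric]) (use c_closed gen_closed[OF i] in \<open>auto simp: finite_exps\<close>)
  finally show ?thesis .
qed

lemma var_mult_vanishes_above:
  assumes "i < n" "length a = n" "\<forall>g\<in>exps n k. a < g \<longrightarrow> d g = \<zero>"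
    and "g \<in> exps n (Suc k)" "exp_inc i a < g"
  shows "var_mult R i d g = \<zero>"
proof (cases "0 < g ! i")
  case True
  have g': "exp_dec i g \<in> exps n k" using assms(4,1) True by (rule exp_dec_in_exps)
  have "exp_inc i a < exp_inc i (exp_dec i g)" using assms(5) True by simp
  then have "a < exp_dec i g"
    using exp_inc_less_exp_inc_iff[of a "exp_dec i g" i] assms(1,2) g' by (simp add: exps_def)
  then show ?thesis using assms(3) g' True by (simp add: var_mult_def)
qed (simp add: var_mult_def)

definition forms :: "nat \<Rightarrow> 'a set" where
  "forms k = form_eval R fs k ` (UNIV \<rightarrow> carrier R)"

lemma forms_ideal: "ideal (forms k) R"
proof (rule idealI_closed)
  show "forms k \<subseteq> carrier R" unfolding forms_def by auto
  have "\<zero> = form_eval R fs k (\<lambda>_. \<zero>)" by (rule form_eval_eq_zero[symmetric]) (rule refl)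
  moreover have "(\<lambda>_. \<zero>) \<in> UNIV \<rightarrow> carrier R" by simp
  ultimately show "\<zero> \<in> forms k"
    unfolding forms_def by (rule image_eqI)
  show "x \<oplus> y \<in> forms k" if x: "x \<in> forms k" and y: "y \<in> forms k" for x y
  proof -
    obtain c where "x = form_eval R fs k c" "c \<in> UNIV \<rightarrow> carrier R"
      using x unfolding forms_def by auto
    moreover obtain d where "y = form_eval R fs k d" "d \<in> UNIV \<rightarrow> carrier R"
      using y unfolding forms_def by auto
    ultimately show ?thesis
      unfolding forms_def using form_eval_add
      by (intro image_eqI[of _ _ "\<lambda>g. c g \<oplus> d g"]) (auto simp: Pi_iff)
  qed
  show "r \<otimes> x \<in> forms k" if r: "r \<in> carrier R" and x: "x \<in> forms k" for r x
  proof -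
    obtain c where "x = form_eval R fs k c" "c \<in> UNIV \<rightarrow> carrier R"
      using x unfolding forms_def by auto
    then show ?thesis
      unfolding forms_def using form_eval_smult r
      by (intro image_eqI[of _ _ "\<lambda>g. r \<otimes> c g"]) (auto simp: Pi_iff)
  qed
qed

lemma forms_0: "forms 0 = carrier R"
proof -
  have "form_eval R fs 0 (\<lambda>_. y) = y" if "y \<in> carrier R" for y
    using that by (simp add: form_eval_def exps_0 monomial_replicate_0)
  then show ?thesis
    unfolding forms_def by (auto intro!: image_eqI[of _ _ "\<lambda>_. _"])
qed

lemma ideal_pow_subset_forms: "ideal_pow R I k \<subseteq> forms k"
proof (induction k)
  case 0
  show ?case by (simp only: ideal_pow.simps forms_0 order_refl)
next
  case (Suc k)
  have "I \<subseteq> ideal_colon R (forms (Suc k)) {y}" if y: "y \<in> forms k" for y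
  proof (rule genideal_minimal)
    have "y \<in> carrier R" by (rule ideal.Icarr[OF forms_ideal y])
    then show "ideal (ideal_colon R (forms (Suc k)) {y}) R"
      by (intro ideal_colon_is_ideal forms_ideal) simp
    obtain c where c: "y = form_eval R fs k c" "c \<in> UNIV \<rightarrow> carrier R"
      using y unfolding forms_def by auto
    have "fs ! i \<otimes> y \<in> forms (Suc k)" if "i < n" for i
      unfolding forms_def c(1) using c(2) that form_eval_var_mult gen_closed
      by (intro image_eqI[of _ _ "var_mult R i c"]) auto
    then show "set fs \<subseteq> ideal_colon R (forms (Suc k)) {y}"
      using gens_carrier by (auto simp: ideal_colon_def in_set_conv_nth)
  qed
  then show ?case
    using Suc.IH by (auto simp: ideal_colon_def intro!: ideal_prod_subset[OF forms_ideal])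
qed

end

section \<open>Leading coefficient ideals of a filtration\<close>

locale rees_filtration = cring_gens +
  fixes N :: "nat \<Rightarrow> 'a set"
  assumes N_ideal: "ideal (N k) R"
    and N_step: "I \<cdot> N k \<subseteq> N (Suc k)"
    and N_subset_pow: "N k \<subseteq> ideal_pow R I k"
begin

definition reps :: "nat \<Rightarrow> (nat list \<Rightarrow> 'a) set" where
  "reps k = {c \<in> UNIV \<rightarrow> carrier R. form_eval R fs k c \<in> N k}"

text \<open>Exponent vectors are compared lexicographically, so \<open>lead_ideal b\<close> is the ideal of
  leading coefficients at \<open>b\<close> of forms representing elements of \<open>N\<close>.\<close>

definition reps_below :: "nat list \<Rightarrow> (nat list \<Rightarrow> 'a) set" where
  "reps_below b = {c \<in> reps (sum_list b). \<forall>g\<in>exps n (sum_list b). b < g \<longrightarrow> c g = \<zero>}"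

definition lead_ideal :: "nat list \<Rightarrow> 'a set" where
  "lead_ideal b = (\<lambda>c. c b) ` reps_below b"

definition lower_leads :: "nat list \<Rightarrow> 'a set" where
  "lower_leads b = {finsum R r {i. i < n \<and> 0 < b ! i} | r.
     \<forall>i. i < n \<and> 0 < b ! i \<longrightarrow> r i \<in> lead_ideal (exp_dec i b)}"

definition new_lead :: "nat list \<Rightarrow> bool" where
  "new_lead b \<longleftrightarrow> length b = n \<and> \<not> lead_ideal b \<subseteq> lower_leads b"

lemma reps_var_mult:
  assumes "c \<in> reps k" "i < n"
  shows "var_mult R i c \<in> reps (Suc k)"
proof -
  have c: "c \<in> UNIV \<rightarrow> carrier R" "form_eval R fs k c \<in> N k" using assms(1) by (simp_all add: reps_def)
  have "form_eval R fs (Suc k) (var_mult R i c) \<in> I \<cdot> N k"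
    unfolding form_eval_var_mult[OF c(1) assms(2)] using gen_in_ideal[OF assms(2)] c(2)
    by (rule ideal_prod.prod)
  then show ?thesis using N_step c(1) by (auto simp: reps_def)
qed

lemma reps_diff:
  assumes "c \<in> reps (Suc k)" "e \<in> UNIV \<rightarrow> carrier R" "form_eval R fs (Suc k) e \<in> I \<cdot> N k"
  shows "(\<lambda>g. c g \<ominus> e g) \<in> reps (Suc k)"
proof -
  interpret N: ideal "N (Suc k)" R by (rule N_ideal)
  have "form_eval R fs (Suc k) e \<in> N (Suc k)" using assms(3) N_step by blast
  then show ?thesis
    using assms(1,2) form_eval_diff[of c e "Suc k"] by (auto simp: reps_def Pi_iff a_minus_def)
qed

lemma lead_ideal_ideal: "ideal (lead_ideal b) R"
proof (rule idealI_closed)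
  interpret N: ideal "N (sum_list b)" R by (rule N_ideal)
  show "lead_ideal b \<subseteq> carrier R"
    by (auto simp: lead_ideal_def reps_below_def reps_def)
  have "(\<lambda>_. \<zero>) \<in> reps_below b"
    by (simp add: reps_below_def reps_def form_eval_eq_zero)
  then show "\<zero> \<in> lead_ideal b"
    unfolding lead_ideal_def by (rule image_eqI[rotated]) simp
  show "x \<oplus> y \<in> lead_ideal b" if x: "x \<in> lead_ideal b" and y: "y \<in> lead_ideal b" for x y
  proof -
    obtain c where c: "x = c b" "c \<in> reps_below b" using x unfolding lead_ideal_def by auto
    obtain d where d: "y = d b" "d \<in> reps_below b" using y unfolding lead_ideal_def by auto
    have "(\<lambda>g. c g \<oplus> d g) \<in> reps_below b"
      using c(2) d(2) form_eval_add[of c d "sum_list b"]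
      by (auto simp: reps_below_def reps_def Pi_iff)
    then show ?thesis unfolding lead_ideal_def c(1) d(1) by (rule image_eqI[rotated]) simp
  qed
  show "r \<otimes> x \<in> lead_ideal b" if r: "r \<in> carrier R" and x: "x \<in> lead_ideal b" for r x
  proof -
    obtain c where c: "x = c b" "c \<in> reps_below b" using x unfolding lead_ideal_def by auto
    have "(\<lambda>g. r \<otimes> c g) \<in> reps_below b"
      using c(2) r form_eval_smult[of c r "sum_list b"]
      by (auto simp: reps_below_def reps_def Pi_iff N.I_l_closed)
    then show ?thesis unfolding lead_ideal_def c(1) by (rule image_eqI[rotated]) simp
  qed
qed

lemma lead_ideal_exp_inc:
  assumes "length b = n" "i < n"
  shows "lead_ideal b \<subseteq> lead_ideal (exp_inc i b)"
proof
  fix x assume "x \<in> lead_ideal b"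
  then obtain c where c: "x = c b" "c \<in> reps_below b" unfolding lead_ideal_def by auto
  have sum: "sum_list (exp_inc i b) = Suc (sum_list b)"
    using exp_inc_in_exps[of b n "sum_list b" i] assms by (simp add: exps_def)
  have "var_mult R i c \<in> reps_below (exp_inc i b)"
    unfolding reps_below_def sum
  proof (intro CollectI conjI ballI impI)
    show "var_mult R i c \<in> reps (Suc (sum_list b))"
      using c(2) assms(2) by (simp add: reps_below_def reps_var_mult)
    show "var_mult R i c g = \<zero>" if "g \<in> exps n (Suc (sum_list b))" "exp_inc i b < g" for g
      using var_mult_vanishes_above[OF assms(2,1) _ that] c(2) by (simp add: reps_below_def)
  qed
  moreover have "x = var_mult R i c (exp_inc i b)"
    using c(1) assms by (simp add: var_mult_def)
  ultimately show "x \<in> lead_ideal (exp_inc i b)"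
    unfolding lead_ideal_def by (metis image_eqI)
qed

lemma lead_ideal_mono:
  assumes "length a = n" "list_all2 (\<le>) a b"
  shows "lead_ideal a \<subseteq> lead_ideal b"
  using assms(2)
proof (induction "sum_list b" arbitrary: b rule: less_induct)
  case less
  show ?case
  proof (cases "a = b")
    case False
    obtain i where i: "i < length b" "0 < b ! i" "list_all2 (\<le>) a (exp_dec i b)"
      using less.prems False by (rule list_all2_le_exp_dec)
    have "length b = n" using assms(1) less.prems list_all2_lengthD by metis
    have "lead_ideal a \<subseteq> lead_ideal (exp_dec i b)"
      using less.hyps[OF sum_list_exp_dec[OF i(1,2)] i(3)] .
    also have "\<dots> \<subseteq> lead_ideal (exp_inc i (exp_dec i b))"
      using lead_ideal_exp_inc \<open>length b = n\<close> i(1) by simp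
    finally show ?thesis using i(2) by simp
  qed simp
qed

lemma lead_ideal_subset_lower_leads:
  assumes "i < n" "0 < b ! i"
  shows "lead_ideal (exp_dec i b) \<subseteq> lower_leads b"
proof
  fix x assume x: "x \<in> lead_ideal (exp_dec i b)"
  interpret L: ideal "lead_ideal (exp_dec j b)" R for j by (rule lead_ideal_ideal)
  define r where "r j = (if j = i then x else \<zero>)" for j
  have "finsum R r {j. j < n \<and> 0 < b ! j} = x"
    unfolding r_def
    using add.finprod_singleton_swap[of i "{j. j < n \<and> 0 < b ! j}" "\<lambda>_. x"] assms L.Icarr[OF x]
    by simp
  moreover have "\<forall>j. j < n \<and> 0 < b ! j \<longrightarrow> r j \<in> lead_ideal (exp_dec j b)"
    using x by (simp add: r_def)
  ultimately show "x \<in> lower_leads b" unfolding lower_leads_def by blast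
qed

lemma lead_ideal_subset_lower_leads_if_less:
  assumes "length a = n" "list_all2 (\<le>) a b" "a \<noteq> b"
  shows "lead_ideal a \<subseteq> lower_leads b"
proof -
  obtain i where i: "i < length b" "0 < b ! i" "list_all2 (\<le>) a (exp_dec i b)"
    using assms(2,3) by (rule list_all2_le_exp_dec)
  have "length b = n" using assms(1,2) list_all2_lengthD by metis
  then show ?thesis
    using lead_ideal_mono[OF assms(1) i(3)] lead_ideal_subset_lower_leads[of i b] i by auto
qed

text \<open>The lift is \<open>\<Sum>\<^sub>i x\<^sub>i d\<^sub>i\<close>, where \<open>d\<^sub>i\<close> represents an element of \<open>N\<^sub>k\<close> with leading
  coefficient \<open>r\<^sub>i\<close> at \<open>b - e\<^sub>i\<close>.\<close>

lemma lower_leads_lift: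
  assumes "x \<in> lower_leads b" "b \<in> exps n (Suc k)"
  obtains e where "e \<in> UNIV \<rightarrow> carrier R" "form_eval R fs (Suc k) e \<in> I \<cdot> N k"
    and "e b = x" "\<forall>g\<in>exps n (Suc k). b < g \<longrightarrow> e g = \<zero>"
proof -
  define J where "J = {i. i < n \<and> 0 < b ! i}"
  have J: "finite J" "\<And>i. i \<in> J \<Longrightarrow> i < n" "\<And>i. i \<in> J \<Longrightarrow> 0 < b ! i"
    by (simp_all add: J_def)
  obtain r where r: "x = finsum R r J" "\<And>i. i \<in> J \<Longrightarrow> r i \<in> lead_ideal (exp_dec i b)"
    using assms(1) unfolding lower_leads_def J_def by blast
  have "\<exists>d. d \<in> reps_below (exp_dec i b) \<and> r i = d (exp_dec i b)" if "i \<in> J" for i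
    using r(2)[OF that] unfolding lead_ideal_def by blast
  then obtain d where d: "\<And>i. i \<in> J \<Longrightarrow> d i \<in> reps_below (exp_dec i b)"
    "\<And>i. i \<in> J \<Longrightarrow> r i = d i (exp_dec i b)"
    by metis
  have deg: "sum_list (exp_dec i b) = k" if "i \<in> J" for i
    using exp_dec_in_exps[OF assms(2) J(2,3)[OF that]] by (simp add: exps_def)
  have d_reps: "d i \<in> reps k" and d_closed: "d i \<in> UNIV \<rightarrow> carrier R" if "i \<in> J" for i
    using d(1)[OF that] deg[OF that] by (simp_all add: reps_below_def reps_def)
  define e where "e g = (\<Oplus>i\<in>J. var_mult R i (d i) g)" for g
  show ?thesis
  proof
    show "e \<in> UNIV \<rightarrow> carrier R"
      unfolding e_def using d_closed by (auto intro!: finsum_closed simp: var_mult_def Pi_iff)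
    have "form_eval R fs (Suc k) e = (\<Oplus>i\<in>J. form_eval R fs (Suc k) (var_mult R i (d i)))"
      unfolding e_def
      by (rule form_eval_finsum[where d="\<lambda>i. var_mult R i (d i)", OF J(1)]) (simp add: d_closed)
    also have "\<dots> = (\<Oplus>i\<in>J. fs ! i \<otimes> form_eval R fs k (d i))"
      using d_closed J(2) by (intro finsum_cong') (auto simp: form_eval_var_mult gen_closed)
    also have "\<dots> \<in> I \<cdot> N k"
    proof (rule ideal_finsum_closed[OF ideal_prod_is_ideal[OF gens_ideal N_ideal] J(1)])
      fix i assume "i \<in> J"
      then show "fs ! i \<otimes> form_eval R fs k (d i) \<in> I \<cdot> N k"
        using gen_in_ideal J(2) d_reps by (auto simp: reps_def intro: ideal_prod.prod)
    qed
    finally show "form_eval R fs (Suc k) e \<in> I \<cdot> N k" .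
    show "e b = x"
      unfolding e_def r(1) using J d(2) d_closed
      by (intro finsum_cong') (auto simp: var_mult_def Pi_iff)
    show "\<forall>g\<in>exps n (Suc k). b < g \<longrightarrow> e g = \<zero>"
    proof (intro ballI impI)
      fix g assume g: "g \<in> exps n (Suc k)" "b < g"
      have "var_mult R i (d i) g = \<zero>" if "i \<in> J" for i
        using var_mult_vanishes_above[of i "exp_dec i b" k "d i" g] d(1)[OF that] deg[OF that]
          J(2,3)[OF that] assms(2) g
        by (simp add: reps_below_def exps_def)
      then show "e g = \<zero>" by (simp add: e_def add.finprod_one_eqI)
    qed
  qed
qed

text \<open>Induction on the number of exponent vectors below the leading one: subtracting a lift of
  the leading coefficient removes the leading term at the cost of an element of \<open>I N\<^sub>k\<close>.\<close>

lemma form_eval_mem_ideal_prod: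
  assumes no_new: "\<forall>b\<in>exps n (Suc k). \<not> new_lead b" and "c \<in> reps (Suc k)"
  shows "form_eval R fs (Suc k) c \<in> I \<cdot> N k"
proof -
  let ?E = "exps n (Suc k)"
  interpret IN: ideal "I \<cdot> N k" R by (rule ideal_prod_is_ideal[OF gens_ideal N_ideal])
  have "form_eval R fs (Suc k) c \<in> I \<cdot> N k"
    if "b \<in> ?E" "c \<in> reps (Suc k)" "\<forall>g\<in>?E. b < g \<longrightarrow> c g = \<zero>" for b c
    using that
  proof (induction "card {g \<in> ?E. g < b}" arbitrary: b c rule: less_induct)
    case less
    have c_closed: "c \<in> UNIV \<rightarrow> carrier R" using less.prems(2) by (simp add: reps_def)
    have "c \<in> reps_below b" using less.prems by (simp add: reps_below_def exps_def)
    then have "c b \<in> lead_ideal b" unfolding lead_ideal_def by (rule imageI)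
    then have "c b \<in> lower_leads b" using no_new less.prems(1) by (auto simp: new_lead_def exps_def)
    then obtain e where e: "e \<in> UNIV \<rightarrow> carrier R" "form_eval R fs (Suc k) e \<in> I \<cdot> N k"
      and e_top: "e b = c b" "\<forall>g\<in>?E. b < g \<longrightarrow> e g = \<zero>"
      using less.prems(1) by (rule lower_leads_lift)
    let ?c' = "\<lambda>g. c g \<ominus> e g"
    have "form_eval R fs (Suc k) ?c' \<in> I \<cdot> N k"
    proof (cases rule: form_eval_zero_or_leading[of "Suc k" ?c'])
      case (2 b')
      have "b' < b"
      proof (rule ccontr)
        assume "\<not> b' < b"
        then have "b = b' \<or> b < b'" by auto
        then have "c b' \<ominus> e b' = \<zero>"
          using e_top less.prems(3) 2(1) c_closed by (auto simp: Pi_iff r_neg a_minus_def)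
        with 2(2) show False by simp
      qed
      then have "{g \<in> ?E. g < b'} \<subset> {g \<in> ?E. g < b}" using 2(1) by auto
      then have "card {g \<in> ?E. g < b'} < card {g \<in> ?E. g < b}"
        by (rule psubset_card_mono[rotated]) (simp add: finite_exps)
      moreover have "?c' \<in> reps (Suc k)" using less.prems(2) e(1,2) by (rule reps_diff)
      ultimately show ?thesis using less.hyps 2(1,3) by blast
    qed simp
    moreover have "form_eval R fs (Suc k) c = form_eval R fs (Suc k) ?c' \<oplus> form_eval R fs (Suc k) e"
      using form_eval_diff[OF c_closed e(1)] form_eval_closed[OF e(1)] form_eval_closed[OF c_closed]
      by (simp add: a_minus_def a_assoc l_neg)
    ultimately show ?case using e(2) by simp
  qed
  then show ?thesis
    using assms(2) by (cases rule: form_eval_zero_or_leading[of "Suc k" c]) auto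
qed

end

section \<open>Stability of filtrations\<close>

locale noetherian_rees_filtration = rees_filtration + noetherian_ring R
begin

lemma finite_new_lead: "finite {b. new_lead b}"
proof (rule ccontr)
  assume "infinite {b. new_lead b}"
  then obtain s :: "nat \<Rightarrow> nat list" where s: "inj s" "range s \<subseteq> {b. new_lead b}"
    using infinite_countable_subset[OF \<open>infinite {b. new_lead b}\<close>] by auto
  then have new: "new_lead (s i)" for i by blast
  have len: "length (s i) = n" for i using new[of i] by (simp add: new_lead_def)
  obtain Y where Y: "infinite Y" "\<forall>i\<in>Y. \<forall>j\<in>Y. i < j \<longrightarrow> (\<forall>c<n. s i ! c \<le> s j ! c)"
    using dickson_subsequence[of n s] by blast
  have le: "list_all2 (\<le>) (s i) (s j)" if "i \<in> Y" "j \<in> Y" "i < j" for i j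
    using Y(2) that len by (simp add: list_all2_conv_all_nth)
  have "\<exists>i\<in>Y. \<exists>j\<in>Y. i < j \<and> lead_ideal (s j) \<subseteq> lead_ideal (s i)"
  proof (rule ideals_not_strictly_ascending[OF Y(1)])
    show "\<forall>i\<in>Y. \<forall>j\<in>Y. i < j \<longrightarrow> lead_ideal (s i) \<subseteq> lead_ideal (s j)"
      using lead_ideal_mono[OF len le] by blast
  qed (rule lead_ideal_ideal)
  then obtain i j where ij: "i \<in> Y" "j \<in> Y" "i < j" "lead_ideal (s j) \<subseteq> lead_ideal (s i)"
    by blast
  have "s i \<noteq> s j" using s(1) ij(3) by (metis inj_eq less_irrefl)
  then have "lead_ideal (s i) \<subseteq> lower_leads (s j)"
    by (rule lead_ideal_subset_lower_leads_if_less[OF len le[OF ij(1-3)]])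
  then have "\<not> new_lead (s j)" using ij(4) unfolding new_lead_def by blast
  then show False using new by blast
qed

lemma eventually_stable:
  "\<exists>k0. \<forall>k\<ge>k0. N (Suc k) = I \<cdot> N k"
proof -
  obtain k0 where k0: "\<forall>b. new_lead b \<longrightarrow> sum_list b < k0"
    using finite_new_lead finite_nat_set_iff_bounded[of "sum_list ` {b. new_lead b}"] by auto
  have "N (Suc k) \<subseteq> I \<cdot> N k" if "k0 \<le> k" for k
  proof
    fix y assume y: "y \<in> N (Suc k)"
    then have "y \<in> forms (Suc k)" using N_subset_pow ideal_pow_subset_forms by blast
    then obtain c where c: "y = form_eval R fs (Suc k) c" "c \<in> UNIV \<rightarrow> carrier R"
      unfolding forms_def by auto
    have "\<forall>b\<in>exps n (Suc k). \<not> new_lead b" using k0 that by (fastforce simp: exps_def)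
    moreover have "c \<in> reps (Suc k)" using c y by (simp add: reps_def)
    ultimately show "y \<in> I \<cdot> N k" unfolding c(1) by (rule form_eval_mem_ideal_prod)
  qed
  then show ?thesis using N_step by blast
qed

end

lemma (in noetherian_ring) ideal_filtration_eventually_stable:
  assumes "cring R" and I: "ideal I R"
    and N: "\<And>k. ideal (N k) R" "\<And>k. I \<cdot> N k \<subseteq> N (Suc k)" "\<And>k. N k \<subseteq> ideal_pow R I k"
  shows "\<exists>k0. \<forall>k\<ge>k0. N (Suc k) = I \<cdot> N k"
proof -
  obtain A where A: "A \<subseteq> carrier R" "finite A" "I = Idl A" using finetely_gen[OF I] by blast
  obtain fs where fs: "set fs = A" using finite_list[OF A(2)] by blast
  interpret noetherian_rees_filtration R fs N
    by (intro noetherian_rees_filtration.intro rees_filtration.intro cring_gens.intro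
        rees_filtration_axioms.intro cring_gens_axioms.intro noetherian_ring_axioms)
      (use assms A fs in simp_all)
  show ?thesis using eventually_stable A(3) fs by simp
qed

lemma (in noetherian_domain) scaled_filtration_eventually_stable:
  assumes I: "ideal I R" and Q: "\<And>k. ideal (Q k) R" "\<And>k. I \<cdot> Q k \<subseteq> Q (Suc k)"
    and a: "a \<in> carrier R" "a \<noteq> \<zero>" "\<And>k. (\<lambda>y. a \<otimes> y) ` Q k \<subseteq> ideal_pow R I k"
  shows "\<exists>k0. \<forall>k\<ge>k0. Q (Suc k) = I \<cdot> Q k"
proof -
  let ?aQ = "\<lambda>k. (\<lambda>y. a \<otimes> y) ` Q k"
  have aQ_step: "I \<cdot> ?aQ k \<subseteq> ?aQ (Suc k)" for k
    using ideal_prod_image_mult[OF I Q(1) a(1)] image_mono[OF Q(2)] by (rule order_trans)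
  obtain k0 where k0: "\<forall>k\<ge>k0. ?aQ (Suc k) = I \<cdot> ?aQ k"
    using ideal_filtration_eventually_stable[OF is_cring I ideal_image_mult[OF Q(1) a(1)] aQ_step a(3)]
    by blast
  have "Q (Suc k) \<subseteq> I \<cdot> Q k" if "k0 \<le> k" for k
  proof (rule ideal_image_mult_cancel[OF a(1,2)])
    show "Q (Suc k) \<subseteq> carrier R" "I \<cdot> Q k \<subseteq> carrier R"
      using ideal.Icarr[OF Q(1)] ideal_prod_in_carrier[OF I Q(1)] by blast+
    show "?aQ (Suc k) \<subseteq> (\<lambda>y. a \<otimes> y) ` (I \<cdot> Q k)"
      using k0 that ideal_prod_image_mult[OF I Q(1) a(1)] by simp
  qed
  then show ?thesis using Q(2) by blast
qed

section \<open>Colon ideals of powers\<close>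

lemma (in noetherian_domain) ideal_colon_pow_eventually_stable:
  assumes I: "ideal I R" and P: "P \<subseteq> carrier R" "a \<in> P" "a \<noteq> \<zero>"
  shows "\<exists>k0. \<forall>k\<ge>k0.
    ideal_colon R (ideal_pow R I (Suc k)) P = I \<cdot> ideal_colon R (ideal_pow R I k) P"
proof (rule scaled_filtration_eventually_stable[OF I])
  let ?Q = "\<lambda>k. ideal_colon R (ideal_pow R I k) P"
  show Q: "ideal (?Q k) R" for k
    using ideal_colon_is_ideal[OF ideal_pow_is_ideal[OF I] P(1)] .
  show "I \<cdot> ?Q k \<subseteq> ?Q (Suc k)" for k
  proof (rule ideal_prod_subset[OF Q])
    fix i y assume "i \<in> I" "y \<in> ?Q k"
    moreover have "i \<in> carrier R" using ideal.Icarr[OF I \<open>i \<in> I\<close>] .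
    ultimately show "i \<otimes> y \<in> ?Q (Suc k)"
      using P(1) by (auto simp: ideal_colon_def m_assoc subset_iff intro: ideal_prod.prod)
  qed
  show "a \<in> carrier R" "a \<noteq> \<zero>" using P by auto
  show "(\<lambda>y. a \<otimes> y) ` ?Q k \<subseteq> ideal_pow R I k" for k
    using P(1,2) by (auto simp: ideal_colon_def m_comm)
qed

lemma (in domain) Ass_contains_nonzero:
  assumes "ideal I R" "I \<noteq> {\<zero>}" "P \<in> Ass R (ideal_pow R I k)"
  obtains a where "a \<in> P" "a \<noteq> \<zero>"
proof -
  obtain x where x: "x \<in> carrier R" "P = ideal_colon R (ideal_pow R I k) {x}"
    using assms(3) unfolding Ass_def by blast
  obtain b where b: "b \<in> I" "b \<noteq> \<zero>"
    using assms(1,2) additive_subgroup.zero_closed[OF ideal.axioms(1)] by blast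
  have b_closed: "b \<in> carrier R" by (rule ideal.Icarr[OF assms(1) b(1)])
  have "b [^] k \<in> P"
    using nat_pow_in_ideal_pow[OF assms(1) b(1)] ideal.I_r_closed[OF ideal_pow_is_ideal[OF assms(1)]] x b_closed
    by (simp add: ideal_colon_def)
  moreover have "b [^] k \<noteq> \<zero>" using nat_pow_nonzero b_closed b(2) by blast
  ultimately show ?thesis by (rule that)
qed

theorem corollary2p9:
  fixes R :: "('a, 'b) ring_scheme" and I P :: "'a set"
  assumes "noetherian_domain R"
    and "ideal I R"
    and "I \<noteq> {\<zero>\<^bsub>R\<^esub>}"
    and "P \<in> Ass_inf R I"
  shows "\<exists>k0. \<forall>k \<ge> k0.
           ideal_colon R (ideal_pow R I k) P
             = ideal_prod R I (ideal_colon R (ideal_pow R I (k - 1)) P)"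
proof -
  interpret noetherian_domain R by fact
  obtain k1 where P: "P \<in> Ass R (ideal_pow R I k1)"
    using assms(4) unfolding Ass_inf_def by blast
  then have P_closed: "P \<subseteq> carrier R" by (auto simp: Ass_def ideal_colon_def)
  obtain a where a: "a \<in> P" "a \<noteq> \<zero>\<^bsub>R\<^esub>"
    using Ass_contains_nonzero[OF assms(2,3) P] .
  from ideal_colon_pow_eventually_stable[OF assms(2) P_closed a] obtain k0 where k0: "\<forall>k\<ge>k0.
      ideal_colon R (ideal_pow R I (Suc k)) P = I \<cdot>\<^bsub>R\<^esub> ideal_colon R (ideal_pow R I k) P" ..
  have "ideal_colon R (ideal_pow R I k) P = I \<cdot>\<^bsub>R\<^esub> ideal_colon R (ideal_pow R I (k - 1)) P"
    if "Suc k0 \<le> k" for k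
  proof -
    have "Suc (k - 1) = k" "k0 \<le> k - 1" using that by simp_all
    then show ?thesis using k0 by metis
  qed
  then show ?thesis by blast
qed

end
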